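(* $\mathsf{AP}(R_1,R_1)=\operatorname{Pol}(R_1,R'_1)=\mathsf{\Omega(1)}$.
   Context: Tuples in $\{0,1\}^4$ are written as strings $abcd$. The relations $R_1,\dots,R_5\subseteq\{0,1\}^4$ are $R_1=\{0000,1000,0100,1100,1010,0110,1001,0101,0011,1011,0111,1111\}$, $R_2=\{0000,1000,0100,1100,1010,0101,0011,1111\}$, $R_3=\{0000,1100,1010,0101,0011,1011,0111,1111\}$, $R_4=\{0000,1100,1010,0101,0011,1111\}$, $R_5=\{0000,1100,1010,0110,1001,0101,0011,1111\}$. For $R,S\subseteq\{0,1\}^4$, a Boolean function $f\colon\{0,1\}^n\to\{0,1\}$ is analogy-preserving relative to $(R,S)$ if for all $\mathbf{a},\mathbf{b},\mathbf{c},\mathbf{d}\in\{0,1\}^n$ with $(a_i,b_i,c_i,d_i)\in R$ for every $i$ and such that $(f(\mathbf{a}),f(\mathbf{b}),f(\mathbf{c}),x)\in S$ for some $x\in\{0,1\}$, we have $(f(\mathbf{a}),f(\mathbf{b}),f(\mathbf{c}),f(\mathbf{d}))\in S$; $\mathsf{AP}(R,S)$ is the set of all such functions of all arities. $S':=S\cup\{(a,b,c,d)\mid\nexists x\colon(a,b,c,x)\in S\}$, and $\operatorname{Pol}(R,S)$ is the set of Boolean functions $f$ with $f(\mathbf{a}_1,\dots,\mathbf{a}_n)\in S$ (componentwise) for all $\mathbf{a}_1,\dots,\mathbf{a}_n\in R$. $\mathsf{\Omega(1)}$ is the set of all Boolean functions (of all arities) that are constant, a projection, or the negation of a projection. *)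

theory Defs
  imports Main
begin

text \<open>Boolean values: 0 = False, 1 = True. A 4-tuple abcd is (a,b,c,d).
A Boolean function of arity n is represented as a pair (n, f) with
f :: bool list \<Rightarrow> bool, of which only the values on lists of length n
matter (all definitions below only evaluate f on lists of length n).\<close>

type_synonym tup4 = "bool \<times> bool \<times> bool \<times> bool"
type_synonym bfun = "nat \<times> (bool list \<Rightarrow> bool)"

definition R1 :: "tup4 set" where
  "R1 = {(False,False,False,False), (True,False,False,False), (False,True,False,False),
         (True,True,False,False), (True,False,True,False), (False,True,True,False),
         (True,False,False,True), (False,True,False,True), (False,False,True,True),
         (True,False,True,True), (False,True,True,True), (True,True,True,True)}"

definition AP :: "tup4 set \<Rightarrow> tup4 set \<Rightarrow> bfun set" where
  "AP R S = {(n, f). \<forall>a b c d :: bool list.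
      length a = n \<and> length b = n \<and> length c = n \<and> length d = n \<and>
      (\<forall>i<n. (a!i, b!i, c!i, d!i) \<in> R) \<and> (\<exists>x. (f a, f b, f c, x) \<in> S)
      \<longrightarrow> (f a, f b, f c, f d) \<in> S}"

definition prime_rel :: "tup4 set \<Rightarrow> tup4 set" where
  "prime_rel S = S \<union> {(a,b,c,d). \<not> (\<exists>x. (a,b,c,x) \<in> S)}"

definition Pol :: "tup4 set \<Rightarrow> tup4 set \<Rightarrow> bfun set" where
  "Pol R S = {(n, f). \<forall>t :: nat \<Rightarrow> tup4. (\<forall>i<n. t i \<in> R) \<longrightarrow>
      (f (map (\<lambda>i. fst (t i)) [0..<n]),
       f (map (\<lambda>i. fst (snd (t i))) [0..<n]),
       f (map (\<lambda>i. fst (snd (snd (t i)))) [0..<n]),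
       f (map (\<lambda>i. snd (snd (snd (t i)))) [0..<n])) \<in> S}"

definition Omega1 :: "bfun set" where
  "Omega1 = {(n, f).
      (\<exists>c. \<forall>x. length x = n \<longrightarrow> f x = c) \<or>
      (\<exists>i<n. \<forall>x. length x = n \<longrightarrow> f x = x!i) \<or>
      (\<exists>i<n. \<forall>x. length x = n \<longrightarrow> f x = (\<not> x!i))}"

end

theory Submission
  imports Defs
begin

text \<open>A tuple lies in R1 iff it satisfies the implication a = b \<longrightarrow> c = d, so a function is
in AP(R1,R1) = Pol(R1,R1') iff it transfers the coordinate sets on which two arguments
agree: if f a = f b, then all coordinates where a and b differ are jointly irrelevant
for f. Applied to a and its negation, this makes f constant or self-dual
(f (\<not>x) \<noteq> f x). For self-dual f, each unit vector e_i has f e_i = f 0 or f e_i = f 1, so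
coordinate i alone, or all coordinates other than i, are irrelevant. They cannot all be
irrelevant, since f 0 \<noteq> f 1; hence f depends on a single coordinate and is a projection
or a negated projection.\<close>

lemma Pol_iff_columns:
  "(n, f) \<in> Pol R S \<longleftrightarrow>
    (\<forall>a b c d. length a = n \<longrightarrow> length b = n \<longrightarrow> length c = n \<longrightarrow> length d = n \<longrightarrow>
      (\<forall>i<n. (a!i, b!i, c!i, d!i) \<in> R) \<longrightarrow> (f a, f b, f c, f d) \<in> S)"
proof
  assume pol: "(n, f) \<in> Pol R S"
  show "\<forall>a b c d. length a = n \<longrightarrow> length b = n \<longrightarrow> length c = n \<longrightarrow> length d = n \<longrightarrow>
      (\<forall>i<n. (a!i, b!i, c!i, d!i) \<in> R) \<longrightarrow> (f a, f b, f c, f d) \<in> S"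
  proof (intro allI impI)
    fix a b c d :: "bool list"
    assume "length a = n" "length b = n" "length c = n" "length d = n"
      and "\<forall>i<n. (a!i, b!i, c!i, d!i) \<in> R"
    moreover have "map (\<lambda>i. xs!i) [0..<n] = xs" if "length xs = n" for xs :: "bool list"
      using that map_nth[of xs] by simp
    ultimately show "(f a, f b, f c, f d) \<in> S"
      using pol unfolding Pol_def by (auto dest!: spec[of _ "\<lambda>i. (a!i, b!i, c!i, d!i)"])
  qed
next
  assume cols: "\<forall>a b c d. length a = n \<longrightarrow> length b = n \<longrightarrow> length c = n \<longrightarrow> length d = n \<longrightarrow>
      (\<forall>i<n. (a!i, b!i, c!i, d!i) \<in> R) \<longrightarrow> (f a, f b, f c, f d) \<in> S"
  show "(n, f) \<in> Pol R S"
    unfolding Pol_def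
  proof (clarify)
    fix t :: "nat \<Rightarrow> tup4"
    assume "\<forall>i<n. t i \<in> R"
    then show "(f (map (\<lambda>i. fst (t i)) [0..<n]), f (map (\<lambda>i. fst (snd (t i))) [0..<n]),
        f (map (\<lambda>i. fst (snd (snd (t i)))) [0..<n]), f (map (\<lambda>i. snd (snd (snd (t i)))) [0..<n]))
        \<in> S"
      using cols by simp
  qed
qed

lemma prime_rel_eq_if_total:
  assumes "\<And>a b c. \<exists>x. (a, b, c, x) \<in> S"
  shows "prime_rel S = S"
  using assms unfolding prime_rel_def by blast

lemma AP_eq_Pol_if_total:
  assumes "\<And>a b c. \<exists>x. (a, b, c, x) \<in> S"
  shows "AP R S = Pol R S"
  using assms unfolding AP_def by (auto simp: Pol_iff_columns)

lemma mem_R1_iff: "(a, b, c, d) \<in> R1 \<longleftrightarrow> (a = b \<longrightarrow> c = d)"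
  by (cases a; cases b; cases c; cases d) (simp_all add: R1_def)

lemma R1_total: "\<exists>x. (a, b, c, x) \<in> R1"
  by (auto simp: mem_R1_iff)

definition R1_compatible :: "nat \<Rightarrow> (bool list \<Rightarrow> bool) \<Rightarrow> bool" where
  "R1_compatible n f \<longleftrightarrow> (\<forall>a b c d. length a = n \<longrightarrow> length b = n \<longrightarrow> length c = n \<longrightarrow>
     length d = n \<longrightarrow> (\<forall>i<n. a!i = b!i \<longrightarrow> c!i = d!i) \<longrightarrow> f a = f b \<longrightarrow> f c = f d)"

lemma Pol_R1_iff: "(n, f) \<in> Pol R1 R1 \<longleftrightarrow> R1_compatible n f"
  unfolding Pol_iff_columns R1_compatible_def mem_R1_iff by blast

definition irrelevant :: "nat \<Rightarrow> (bool list \<Rightarrow> bool) \<Rightarrow> nat set \<Rightarrow> bool" where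
  "irrelevant n f S \<longleftrightarrow> (\<forall>x y. length x = n \<longrightarrow> length y = n \<longrightarrow>
     (\<forall>i<n. i \<notin> S \<longrightarrow> x!i = y!i) \<longrightarrow> f x = f y)"

lemma irrelevantD:
  "irrelevant n f S \<Longrightarrow> length x = n \<Longrightarrow> length y = n \<Longrightarrow>
    (\<And>i. i < n \<Longrightarrow> i \<notin> S \<Longrightarrow> x!i = y!i) \<Longrightarrow> f x = f y"
  unfolding irrelevant_def by blast

lemma irrelevant_empty: "irrelevant n f {}"
  unfolding irrelevant_def by (intro allI impI arg_cong[where f = f] nth_equalityI) auto

lemma irrelevant_Un:
  assumes S: "irrelevant n f S" and T: "irrelevant n f T"
  shows "irrelevant n f (S \<union> T)"
  unfolding irrelevant_def
proof (intro allI impI)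
  fix x y :: "bool list"
  assume len: "length x = n" "length y = n" and agree: "\<forall>i<n. i \<notin> S \<union> T \<longrightarrow> x!i = y!i"
  define w where "w = map (\<lambda>i. if i \<in> T then y!i else x!i) [0..<n]"
  have "f x = f w"
    using len agree by (intro irrelevantD[OF T]) (auto simp: w_def)
  also have "f w = f y"
    using len agree by (intro irrelevantD[OF S]) (auto simp: w_def)
  finally show "f x = f y" .
qed

lemma irrelevant_finite:
  "finite S \<Longrightarrow> (\<And>i. i \<in> S \<Longrightarrow> irrelevant n f {i}) \<Longrightarrow> irrelevant n f S"
proof (induction S rule: finite_induct)
  case empty
  show ?case by (rule irrelevant_empty)
next
  case (insert i S)
  then show ?case using irrelevant_Un[of n f "{i}" S] by simp
qed

lemma irrelevant_all_imp_const:
  "irrelevant n f {..<n} \<Longrightarrow> length x = n \<Longrightarrow> length y = n \<Longrightarrow> f x = f y"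
  by (erule irrelevantD) auto

lemma irrelevant_if_equal_values:
  assumes "R1_compatible n f" "length a = n" "length b = n" "f a = f b"
    and "\<And>i. i < n \<Longrightarrow> i \<in> S \<Longrightarrow> a!i \<noteq> b!i"
  shows "irrelevant n f S"
  using assms unfolding R1_compatible_def irrelevant_def by blast

lemma Omega1_if_not_self_dual:
  assumes compat: "R1_compatible n f" and a: "length a = n" "f (map Not a) = f a"
  shows "(n, f) \<in> Omega1"
proof -
  have "irrelevant n f {..<n}"
    using a by (intro irrelevant_if_equal_values[OF compat, of "map Not a" a]) auto
  then have "\<forall>x. length x = n \<longrightarrow> f x = f a"
    using irrelevant_all_imp_const[OF _ _ a(1)] by blast
  then show ?thesis unfolding Omega1_def by blast
qed

lemma Omega1_if_depends_on_one:
  assumes i: "i < n" "irrelevant n f (- {i})"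
    and nonconst: "f ((replicate n False)[i := True]) \<noteq> f (replicate n False)"
  shows "(n, f) \<in> Omega1"
proof -
  let ?z = "replicate n False"
  have f_eq: "f x = f (?z[i := x!i])" if "length x = n" for x
    using that by (intro irrelevantD[OF i(2)]) (auto simp: nth_list_update)
  have "?z[i := False] = ?z"
    using i(1) by (simp add: list_update_same_conv)
  then have "f x = (if f ?z then \<not> x!i else x!i)" if "length x = n" for x
    using f_eq[OF that] nonconst by (cases "x!i") auto
  then show ?thesis unfolding Omega1_def using i(1) by (cases "f ?z") auto
qed

lemma self_dual_depends_on_one:
  assumes compat: "R1_compatible n f" and self_dual: "\<And>a. length a = n \<Longrightarrow> f (map Not a) \<noteq> f a"
  shows "\<exists>i<n. irrelevant n f (- {i})"
proof (rule ccontr)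
  assume none: "\<not> (\<exists>i<n. irrelevant n f (- {i}))"
  let ?z = "replicate n False"
  have "irrelevant n f {i}" if "i < n" for i
  proof (cases "f (?z[i := True]) = f ?z")
    case True
    then show ?thesis
      by (intro irrelevant_if_equal_values[OF compat, of "?z[i := True]" ?z]) auto
  next
    case False
    \<comment> \<open>f takes only two values, so f e_i = f (\<not> 0)\<close>
    with self_dual[of ?z] have "f (?z[i := True]) = f (map Not ?z)" by auto
    then have "irrelevant n f (- {i})"
      by (intro irrelevant_if_equal_values[OF compat, of "?z[i := True]" "map Not ?z"])
        (auto simp: nth_list_update)
    with none that show ?thesis by blast
  qed
  then have "irrelevant n f {..<n}" by (intro irrelevant_finite[of "{..<n}"]) auto
  then have "f (map Not ?z) = f ?z" by (rule irrelevant_all_imp_const) auto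
  with self_dual[of ?z] show False by simp
qed

lemma Omega1_iff_R1_compatible: "(n, f) \<in> Omega1 \<longleftrightarrow> R1_compatible n f"
proof
  assume "(n, f) \<in> Omega1"
  then show "R1_compatible n f" unfolding Omega1_def R1_compatible_def by auto
next
  assume compat: "R1_compatible n f"
  let ?z = "replicate n False"
  show "(n, f) \<in> Omega1"
  proof (cases "\<exists>a. length a = n \<and> f (map Not a) = f a")
    case True
    then show ?thesis using Omega1_if_not_self_dual[OF compat] by blast
  next
    case False
    then have self_dual: "\<And>a. length a = n \<Longrightarrow> f (map Not a) \<noteq> f a" by blast
    then obtain i where i: "i < n" "irrelevant n f (- {i})"
      using self_dual_depends_on_one[OF compat] by blast
    have "f (?z[i := True]) = f (map Not ?z)"
      by (intro irrelevantD[OF i(2)]) (auto simp: nth_list_update)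
    with self_dual[of ?z] have "f (?z[i := True]) \<noteq> f ?z" by simp
    with i show ?thesis by (rule Omega1_if_depends_on_one)
  qed
qed

theorem mainTheorem7:
  shows "AP R1 R1 = Pol R1 (prime_rel R1) \<and> Pol R1 (prime_rel R1) = Omega1"
proof -
  have prime: "prime_rel R1 = R1" by (rule prime_rel_eq_if_total[OF R1_total])
  have "AP R1 R1 = Pol R1 R1" by (rule AP_eq_Pol_if_total[OF R1_total])
  moreover have "Pol R1 R1 = Omega1"
    by (auto simp: Pol_R1_iff Omega1_iff_R1_compatible)
  ultimately show ?thesis by (simp add: prime)
qed

end
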